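(* Let $G=(V,E)$ be $(2,2)$-$C_i$-tight and let $v\in V$ have degree 3 with $N(v)\cap N(v')=\{x,x'\}$, so $N(v)=\{x,x',y\}$. Then, after possibly interchanging the names of $x$ and $x'$, one of the following holds: (1) $xy,x'y,xy',x'y'\in E$ and $G[\{v,v',x,x',y,y'\}]\cong F_1$; (2) $xy,x'y'\in E$, $xy',x'y\notin E$, and $G-\{v,v'\}+\{xy',x'y\}$ is $(2,2)$-$C_i$-tight; (3) $xy,x'y,xy',x'y'\notin E$, and either $G-\{v,v'\}+\{xy,x'y'\}$ or $G-\{v,v'\}+\{xy',x'y\}$ is $(2,2)$-$C_i$-tight.
   Context: A $\mathbb{Z}_2$-symmetric graph is a finite simple graph $G=(V,E)$ with an automorphism $\theta$, $\theta^2=\mathrm{id}$; write $v'=\theta(v)$. A vertex is fixed if $v'=v$; an edge $uv$ is fixed if $\{u',v'\}=\{u,v\}$. $G$ is $(2,2)$-sparse if every subgraph $(V',E')$ with $V'\ne\emptyset$ has $|E'|\le2|V'|-2$, $(2,2)$-tight if also $|E|=2|V|-2$. $G$ is $(2,2)$-$C_i$-tight if it is $(2,2)$-tight and $\theta$ fixes no vertex and no edge. $F_1$ is the graph on six vertices $a,b,c,d,e,f$ whose edges are all edges between $\{c,d\}$ and $\{a,b,e,f\}$ together with $ab$ and $ef$ (10 edges). $G-\{v,v'\}+\{st,s't'\}$ denotes deleting $v,v'$ and adding edges $st,s't'$ with the restricted involution. *)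

theory Defs
  imports Main
begin

definition simple_graph :: "'a set \<Rightarrow> 'a set set \<Rightarrow> bool" where
  "simple_graph V E \<longleftrightarrow> finite V \<and>
     (\<forall>e\<in>E. \<exists>u w. e = {u, w} \<and> u \<noteq> w \<and> u \<in> V \<and> w \<in> V)"

definition z2_symmetric :: "'a set \<Rightarrow> 'a set set \<Rightarrow> ('a \<Rightarrow> 'a) \<Rightarrow> bool" where
  "z2_symmetric V E \<theta> \<longleftrightarrow> simple_graph V E \<and>
     (\<forall>v\<in>V. \<theta> v \<in> V \<and> \<theta> (\<theta> v) = v) \<and>
     (\<forall>e\<in>E. \<theta> ` e \<in> E)"

definition sparse22 :: "'a set \<Rightarrow> 'a set set \<Rightarrow> bool" where
  "sparse22 V E \<longleftrightarrow> (\<forall>V' E'. V' \<noteq> {} \<and> V' \<subseteq> V \<and> E' \<subseteq> E \<and> (\<forall>e\<in>E'. e \<subseteq> V') \<longrightarrow>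
       int (card E') \<le> 2 * int (card V') - 2)"

definition tight22 :: "'a set \<Rightarrow> 'a set set \<Rightarrow> bool" where
  "tight22 V E \<longleftrightarrow> sparse22 V E \<and> int (card E) = 2 * int (card V) - 2"

definition fixed_vertex :: "('a \<Rightarrow> 'a) \<Rightarrow> 'a \<Rightarrow> bool" where
  "fixed_vertex \<theta> v \<longleftrightarrow> \<theta> v = v"

definition fixed_edge :: "('a \<Rightarrow> 'a) \<Rightarrow> 'a set \<Rightarrow> bool" where
  "fixed_edge \<theta> e \<longleftrightarrow> \<theta> ` e = e"

definition Ci_tight22 :: "'a set \<Rightarrow> 'a set set \<Rightarrow> ('a \<Rightarrow> 'a) \<Rightarrow> bool" where
  "Ci_tight22 V E \<theta> \<longleftrightarrow> z2_symmetric V E \<theta> \<and> tight22 V E \<and>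
     (\<forall>v\<in>V. \<not> fixed_vertex \<theta> v) \<and> (\<forall>e\<in>E. \<not> fixed_edge \<theta> e)"

definition nbhd :: "'a set \<Rightarrow> 'a set set \<Rightarrow> 'a \<Rightarrow> 'a set" where
  "nbhd V E v = {u \<in> V. {v, u} \<in> E}"

definition degree :: "'a set \<Rightarrow> 'a set set \<Rightarrow> 'a \<Rightarrow> nat" where
  "degree V E v = card (nbhd V E v)"

definition induced_edges :: "'a set set \<Rightarrow> 'a set \<Rightarrow> 'a set set" where
  "induced_edges E S = {e \<in> E. e \<subseteq> S}"

text \<open>F1 on vertices a,b,c,d,e,f = 0,1,2,3,4,5.\<close>
definition F1_verts :: "nat set" where "F1_verts = {0,1,2,3,4,5}"
definition F1_edges :: "nat set set" where
  "F1_edges = {{2,0},{2,1},{2,4},{2,5},{3,0},{3,1},{3,4},{3,5},{0,1},{4,5}}"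

definition graph_iso :: "'a set \<Rightarrow> 'a set set \<Rightarrow> 'b set \<Rightarrow> 'b set set \<Rightarrow> bool" where
  "graph_iso V E W F \<longleftrightarrow> (\<exists>f. bij_betw f V W \<and>
     (\<forall>e. e \<subseteq> V \<longrightarrow> (e \<in> E \<longleftrightarrow> f ` e \<in> F)))"

text \<open>G - {v,v'} + {st, s't'}: delete v and v', add edges {s,t} and {s',t'}; the involution is restricted.\<close>
definition reduce_V :: "'a set \<Rightarrow> ('a \<Rightarrow> 'a) \<Rightarrow> 'a \<Rightarrow> 'a set" where
  "reduce_V V \<theta> v = V - {v, \<theta> v}"
definition reduce_E :: "'a set set \<Rightarrow> ('a \<Rightarrow> 'a) \<Rightarrow> 'a \<Rightarrow> 'a \<Rightarrow> 'a \<Rightarrow> 'a set set" where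
  "reduce_E E \<theta> v s t = {e \<in> E. v \<notin> e \<and> \<theta> v \<notin> e} \<union> {{s, t}, {\<theta> s, \<theta> t}}"

end

theory Submission
  imports Defs
begin

text \<open>
  Deleting \<open>v, v'\<close> removes two vertices and six edges, so adding the two mirror edges
  \<open>st, s't'\<close> restores the count \<open>2|V| - 2\<close>; the result can only fail to be
  \<open>(2,2)\<close>-sparse if some tight set of \<open>G - {v, v'}\<close> contains \<open>s, t\<close> (or, after applying
  the involution, \<open>s', t'\<close>): a blocker for \<open>st\<close>. No tight set of \<open>G - {v, v'}\<close> contains
  all of \<open>x, x', y, y'\<close>, since adding back \<open>v, v'\<close> with their six edges would violate
  sparsity of \<open>G\<close>. Tight sets sharing a vertex have tight union and the involution maps
  tight sets to tight sets, so in case (2) a blocker for \<open>xy'\<close> together with its mirror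
  image (joined by the edges \<open>xy, x'y'\<close> if they are disjoint), and in case (3) blockers
  for both \<open>xy\<close> and \<open>xy'\<close>, would produce such a forbidden tight set.
\<close>

text \<open>In a \<open>(2,2)\<close>-sparse graph this inequality is an equality; only the lower bound is ever needed.\<close>
definition tight_set :: "'a set set \<Rightarrow> 'a set \<Rightarrow> bool" where
  "tight_set E X \<longleftrightarrow> 2 * int (card X) - 2 \<le> int (card (induced_edges E X))"

lemma finite_induced_edges: "finite E \<Longrightarrow> finite (induced_edges E X)"
  by (simp add: induced_edges_def)

lemma card_induced_edges_supermodular:
  assumes "finite E"
  shows "card (induced_edges E A) + card (induced_edges E B)
     \<le> card (induced_edges E (A \<union> B)) + card (induced_edges E (A \<inter> B))"
proof -
  note fin = finite_induced_edges[OF assms]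
  have "card (induced_edges E A) + card (induced_edges E B)
      = card (induced_edges E A \<union> induced_edges E B) + card (induced_edges E A \<inter> induced_edges E B)"
    by (rule card_Un_Int[OF fin fin])
  also have "induced_edges E A \<inter> induced_edges E B = induced_edges E (A \<inter> B)"
    by (auto simp: induced_edges_def)
  also have "card (induced_edges E A \<union> induced_edges E B) \<le> card (induced_edges E (A \<union> B))"
    by (rule card_mono[OF fin]) (auto simp: induced_edges_def)
  finally show ?thesis by simp
qed

lemma card_induced_edges_Un_disjoint:
  assumes "finite E" "{} \<notin> E" "A \<inter> B = {}"
    and C: "C \<subseteq> induced_edges E (A \<union> B)" "\<forall>e\<in>C. \<not> e \<subseteq> A \<and> \<not> e \<subseteq> B"
  shows "card (induced_edges E A) + card (induced_edges E B) + card C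
     \<le> card (induced_edges E (A \<union> B))"
proof -
  note fin = finite_induced_edges[OF assms(1)]
  have finC: "finite C" using C(1) fin finite_subset by blast
  have "e \<notin> E" if "e \<subseteq> A" "e \<subseteq> B" for e
    using that assms(2,3) by (metis Int_subset_iff subset_empty)
  then have disj1: "induced_edges E A \<inter> induced_edges E B = {}"
    by (auto simp: induced_edges_def)
  have disj2: "(induced_edges E A \<union> induced_edges E B) \<inter> C = {}"
    using C(2) by (auto simp: induced_edges_def)
  have "card (induced_edges E A) + card (induced_edges E B) + card C
      = card (induced_edges E A \<union> induced_edges E B \<union> C)"
    using card_Un_disjoint[OF fin fin disj1] card_Un_disjoint[OF _ finC disj2] fin by simp
  also have "\<dots> \<le> card (induced_edges E (A \<union> B))"
    by (rule card_mono[OF fin]) (use C(1) in \<open>auto simp: induced_edges_def\<close>)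
  finally show ?thesis .
qed

lemma sparse22_induced_edges:
  assumes "sparse22 V E" "S \<noteq> {}" "S \<subseteq> V"
  shows "int (card (induced_edges E S)) \<le> 2 * int (card S) - 2"
proof -
  have "induced_edges E S \<subseteq> E" "\<forall>e\<in>induced_edges E S. e \<subseteq> S"
    by (auto simp: induced_edges_def)
  with assms show ?thesis unfolding sparse22_def by (elim allE[where x = S]) blast
qed

lemma tight_set_Un:
  assumes "sparse22 V E" "finite V" "finite E" "A \<subseteq> V" "B \<subseteq> V"
    and "tight_set E A" "tight_set E B" "A \<inter> B \<noteq> {}"
  shows "tight_set E (A \<union> B)"
proof -
  have "finite A" "finite B" using assms(2,4,5) finite_subset by auto
  then have "card A + card B = card (A \<union> B) + card (A \<inter> B)" by (rule card_Un_Int)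
  moreover have "int (card (induced_edges E (A \<inter> B))) \<le> 2 * int (card (A \<inter> B)) - 2"
    using sparse22_induced_edges[OF assms(1,8)] assms(4) by blast
  moreover note card_induced_edges_supermodular[OF assms(3), of A B]
  ultimately show ?thesis using assms(6,7) unfolding tight_set_def by linarith
qed

lemma tight_set_Un_disjoint:
  assumes "finite E" "{} \<notin> E" "finite A" "finite B" "A \<inter> B = {}"
    and "tight_set E A" "tight_set E B"
    and "C \<subseteq> induced_edges E (A \<union> B)" "\<forall>e\<in>C. \<not> e \<subseteq> A \<and> \<not> e \<subseteq> B" "2 \<le> card C"
  shows "tight_set E (A \<union> B)"
proof -
  have "card (A \<union> B) = card A + card B" by (rule card_Un_disjoint[OF assms(3-5)])
  with card_induced_edges_Un_disjoint[OF assms(1,2,5,8,9)] assms(6,7,10) show ?thesis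
    unfolding tight_set_def by linarith
qed

lemma tight_set_image:
  assumes "finite E" "inj_on f V" "X \<subseteq> V" "\<And>e. e \<in> E \<Longrightarrow> f ` e \<in> E"
    and "tight_set E X"
  shows "tight_set E (f ` X)"
proof -
  have inj: "inj_on f X" using assms(2,3) inj_on_subset by blast
  have "card (induced_edges E X) \<le> card (induced_edges E (f ` X))"
  proof (rule card_inj_on_le)
    show "inj_on ((`) f) (induced_edges E X)"
      by (rule inj_onI) (use inj in \<open>auto simp: induced_edges_def inj_on_image_eq_iff\<close>)
    show "(`) f ` induced_edges E X \<subseteq> induced_edges E (f ` X)"
      using assms(4) by (auto simp: induced_edges_def)
  qed (rule finite_induced_edges[OF assms(1)])
  then show ?thesis using assms(5) card_image[OF inj] unfolding tight_set_def by simp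
qed

locale deg3_shared_pair =
  fixes V :: "'a set" and E :: "'a set set" and \<theta> :: "'a \<Rightarrow> 'a" and v x y :: 'a
  assumes G: "Ci_tight22 V E \<theta>"
    and vV: "v \<in> V"
    and deg: "degree V E v = 3"
    and common: "nbhd V E v \<inter> nbhd V E (\<theta> v) = {x, \<theta> x}"
    and Nv: "nbhd V E v = {x, \<theta> x, y}"
begin

abbreviation "V\<^sub>0 \<equiv> V - {v, \<theta> v}"
abbreviation "E\<^sub>0 \<equiv> {e \<in> E. v \<notin> e \<and> \<theta> v \<notin> e}"

lemma finite_V: "finite V"
  and edge_doubleton: "e \<in> E \<Longrightarrow> \<exists>u w. e = {u, w} \<and> u \<noteq> w \<and> u \<in> V \<and> w \<in> V"
  and theta_in_V: "u \<in> V \<Longrightarrow> \<theta> u \<in> V"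
  and theta_theta: "u \<in> V \<Longrightarrow> \<theta> (\<theta> u) = u"
  and theta_image_edge: "e \<in> E \<Longrightarrow> \<theta> ` e \<in> E"
  and theta_no_fixed_vertex: "u \<in> V \<Longrightarrow> \<theta> u \<noteq> u"
  and theta_no_fixed_edge: "e \<in> E \<Longrightarrow> \<theta> ` e \<noteq> e"
  and sparse: "sparse22 V E"
  and card_E: "int (card E) = 2 * int (card V) - 2"
  using G unfolding Ci_tight22_def z2_symmetric_def simple_graph_def tight22_def
    fixed_vertex_def fixed_edge_def by blast+

lemma edges_Pow_V: "E \<subseteq> Pow V"
  using edge_doubleton by blast

lemma finite_E: "finite E"
  using finite_subset[OF edges_Pow_V] finite_V by simp

lemma empty_notin_E: "{} \<notin> E"
  using edge_doubleton by blast

lemma theta_edge: "{p, q} \<in> E \<Longrightarrow> {\<theta> p, \<theta> q} \<in> E"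
  using theta_image_edge[of "{p, q}"] by simp

lemma inj_on_theta: "inj_on \<theta> V"
  by (metis inj_onI theta_theta)

lemma tight_set_theta_image: "X \<subseteq> V \<Longrightarrow> tight_set E X \<Longrightarrow> tight_set E (\<theta> ` X)"
  using tight_set_image[OF finite_E inj_on_theta] theta_image_edge by blast

lemma tight_set_Un_in_V: "A \<subseteq> V \<Longrightarrow> B \<subseteq> V \<Longrightarrow> tight_set E A \<Longrightarrow> tight_set E B \<Longrightarrow>
    A \<inter> B \<noteq> {} \<Longrightarrow> tight_set E (A \<union> B)"
  using tight_set_Un[OF sparse finite_V finite_E] by blast

lemma neighbourhood_configuration:
  shows in_V: "x \<in> V" "\<theta> x \<in> V" "y \<in> V" "\<theta> y \<in> V" "\<theta> v \<in> V"
    and edges_at_v: "{v, x} \<in> E" "{v, \<theta> x} \<in> E" "{v, y} \<in> E"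
      "{\<theta> v, x} \<in> E" "{\<theta> v, \<theta> x} \<in> E" "{\<theta> v, \<theta> y} \<in> E"
    and non_edges_at_v: "{\<theta> v, y} \<notin> E" "{v, \<theta> y} \<notin> E" "{v, \<theta> v} \<notin> E"
    and distinct: "v \<noteq> \<theta> v" "x \<noteq> \<theta> x" "y \<noteq> \<theta> y"
      "v \<noteq> x" "v \<noteq> \<theta> x" "v \<noteq> y" "v \<noteq> \<theta> y"
      "\<theta> v \<noteq> x" "\<theta> v \<noteq> \<theta> x" "\<theta> v \<noteq> y" "\<theta> v \<noteq> \<theta> y"
      "x \<noteq> y" "x \<noteq> \<theta> y" "\<theta> x \<noteq> y" "\<theta> x \<noteq> \<theta> y"
proof -
  have N: "x \<in> nbhd V E v" "\<theta> x \<in> nbhd V E v" "y \<in> nbhd V E v"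
    "x \<in> nbhd V E (\<theta> v)" "\<theta> x \<in> nbhd V E (\<theta> v)"
    using Nv common by auto
  show V: "x \<in> V" "\<theta> x \<in> V" "y \<in> V" "\<theta> y \<in> V" "\<theta> v \<in> V"
    using N theta_in_V vV by (auto simp: nbhd_def)
  show E: "{v, x} \<in> E" "{v, \<theta> x} \<in> E" "{v, y} \<in> E" "{\<theta> v, x} \<in> E" "{\<theta> v, \<theta> x} \<in> E"
    using N by (auto simp: nbhd_def)
  then show "{\<theta> v, \<theta> y} \<in> E" using theta_edge by blast
  have "card {x, \<theta> x, y} = 3" using deg Nv by (simp add: degree_def)
  then show xy: "x \<noteq> \<theta> x" "x \<noteq> y" "\<theta> x \<noteq> y"
    by (auto simp: card_insert_if split: if_splits)
  show "v \<noteq> \<theta> v" "y \<noteq> \<theta> y" using theta_no_fixed_vertex vV V(3) by metis+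
  show vv: "{v, \<theta> v} \<notin> E"
    using theta_no_fixed_edge[of "{v, \<theta> v}"] theta_theta vV by (auto simp: insert_commute)
  show vy: "{\<theta> v, y} \<notin> E"
  proof
    assume "{\<theta> v, y} \<in> E"
    then have "y \<in> nbhd V E v \<inter> nbhd V E (\<theta> v)" using N V by (auto simp: nbhd_def)
    then show False using common xy by auto
  qed
  then show "{v, \<theta> y} \<notin> E" using theta_edge[of v "\<theta> y"] theta_theta V(3) by auto
  have "{p} \<notin> E" for p using edge_doubleton[of "{p}"] by (auto simp: doubleton_eq_iff)
  then show vx: "v \<noteq> x" "v \<noteq> \<theta> x" "v \<noteq> y" "\<theta> v \<noteq> x" "\<theta> v \<noteq> \<theta> x"
    using E by auto
  show "\<theta> v \<noteq> y" using E(3) vv by auto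
  then show "v \<noteq> \<theta> y" "\<theta> v \<noteq> \<theta> y" "x \<noteq> \<theta> y" "\<theta> x \<noteq> \<theta> y"
    using xy vx(3) theta_theta[OF vV] theta_theta[OF V(1)] theta_theta[OF V(3)] by metis+
qed

lemma theta_V0: "X \<subseteq> V\<^sub>0 \<Longrightarrow> \<theta> ` X \<subseteq> V\<^sub>0"
proof
  fix u assume "X \<subseteq> V\<^sub>0" "u \<in> \<theta> ` X"
  then obtain w where w: "u = \<theta> w" "w \<in> V" "w \<noteq> v" "w \<noteq> \<theta> v" by auto
  then have "\<theta> w \<noteq> v" "\<theta> w \<noteq> \<theta> v" using theta_theta[OF w(2)] theta_theta[OF vV] by metis+
  then show "u \<in> V\<^sub>0" using w theta_in_V by simp
qed

lemma edges_meeting_v_pair: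
  "{e \<in> E. v \<in> e \<or> \<theta> v \<in> e} =
     {{v, x}, {v, \<theta> x}, {v, y}, {\<theta> v, x}, {\<theta> v, \<theta> x}, {\<theta> v, \<theta> y}}"
    (is "?L = ?R")
proof
  show "?R \<subseteq> ?L" using edges_at_v by auto
  show "?L \<subseteq> ?R"
  proof
    fix e assume e: "e \<in> ?L"
    obtain u w where uw: "e = {u, w}" "u \<in> V" "w \<in> V" using e edge_doubleton by blast
    have other: "\<exists>z\<in>V. e = {p, z}" if "p \<in> e" for p
      using uw that by (auto simp: insert_commute)
    show "e \<in> ?R"
    proof (cases "v \<in> e")
      case True
      then obtain z where z: "z \<in> V" "e = {v, z}" using other by blast
      then have "z \<in> nbhd V E v" using e by (simp add: nbhd_def)
      then show ?thesis using z Nv by auto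
    next
      case False
      then obtain z where z: "z \<in> V" "e = {\<theta> v, z}" using other e by blast
      then have "{v, \<theta> z} \<in> E" using e theta_edge[of "\<theta> v" z] theta_theta vV by simp
      then have "\<theta> z \<in> {x, \<theta> x, y}" using Nv theta_in_V z(1) by (auto simp: nbhd_def)
      then have "\<theta> (\<theta> z) \<in> \<theta> ` {x, \<theta> x, y}" by (rule imageI)
      then have "z \<in> {\<theta> x, x, \<theta> y}" using theta_theta[OF z(1)] theta_theta[OF in_V(1)] by simp
      then show ?thesis using z by auto
    qed
  qed
qed

lemma card_edges_meeting_v_pair: "card {e \<in> E. v \<in> e \<or> \<theta> v \<in> e} = 6"
  unfolding edges_meeting_v_pair using distinct by (simp add: doubleton_eq_iff)

lemma card_E0: "int (card E\<^sub>0) = int (card E) - 6"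
proof -
  have "E = E\<^sub>0 \<union> {e \<in> E. v \<in> e \<or> \<theta> v \<in> e}" by auto
  moreover have "card (E\<^sub>0 \<union> {e \<in> E. v \<in> e \<or> \<theta> v \<in> e}) =
      card E\<^sub>0 + card {e \<in> E. v \<in> e \<or> \<theta> v \<in> e}"
    by (rule card_Un_disjoint) (use finite_E in auto)
  ultimately have "card E = card E\<^sub>0 + 6" using card_edges_meeting_v_pair by simp
  then show ?thesis by simp
qed

lemma induced_edges_add_v_pair:
  assumes "W \<subseteq> V\<^sub>0" "x \<in> W" "\<theta> x \<in> W" "y \<in> W" "\<theta> y \<in> W"
  shows "card (induced_edges E (W \<union> {v, \<theta> v})) \<ge> card (induced_edges E W) + 6"
proof -
  have "induced_edges E W \<inter> {e \<in> E. v \<in> e \<or> \<theta> v \<in> e} = {}"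
    unfolding induced_edges_def using assms(1) by blast
  then have "card (induced_edges E W \<union> {e \<in> E. v \<in> e \<or> \<theta> v \<in> e}) = card (induced_edges E W) + 6"
    by (subst card_Un_disjoint)
      (simp_all add: finite_induced_edges finite_E card_edges_meeting_v_pair)
  moreover have "induced_edges E W \<union> {e \<in> E. v \<in> e \<or> \<theta> v \<in> e}
      \<subseteq> induced_edges E (W \<union> {v, \<theta> v})"
    unfolding edges_meeting_v_pair induced_edges_def using assms(2-5) edges_at_v by auto
  ultimately show ?thesis using card_mono[OF finite_induced_edges[OF finite_E]] by metis
qed

lemma card_induced_edges_through_neighbours:
  assumes "W \<subseteq> V\<^sub>0" "x \<in> W" "\<theta> x \<in> W" "y \<in> W" "\<theta> y \<in> W"
  shows "int (card (induced_edges E W)) \<le> 2 * int (card W) - 4"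
proof -
  have "finite W" using assms(1) finite_V finite_subset by blast
  moreover have "v \<notin> W" "\<theta> v \<notin> W" using assms(1) by auto
  ultimately have "card (W \<union> {v, \<theta> v}) = card W + 2"
    using distinct(1) by (simp add: card_insert_if)
  moreover have "int (card (induced_edges E (W \<union> {v, \<theta> v}))) \<le> 2 * int (card (W \<union> {v, \<theta> v})) - 2"
    by (rule sparse22_induced_edges[OF sparse]) (use assms(1) vV in_V(5) in auto)
  ultimately show ?thesis using induced_edges_add_v_pair[OF assms] by linarith
qed

lemma not_tight_set_through_neighbours:
  "W \<subseteq> V\<^sub>0 \<Longrightarrow> x \<in> W \<Longrightarrow> \<theta> x \<in> W \<Longrightarrow> y \<in> W \<Longrightarrow> \<theta> y \<in> W \<Longrightarrow> \<not> tight_set E W"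
  using card_induced_edges_through_neighbours[of W] unfolding tight_set_def by linarith

lemma no_tight_set_through_y_pair:
  assumes X: "X \<subseteq> V\<^sub>0" "tight_set E X" and a: "a \<in> {x, \<theta> x}" "a \<in> X"
    and y: "y \<in> X" "\<theta> y \<in> X"
  shows False
proof -
  have XV: "X \<subseteq> V" and Y0: "\<theta> ` X \<subseteq> V\<^sub>0" using X(1) theta_V0 by auto
  have "\<theta> (\<theta> y) \<in> \<theta> ` X" using y(2) by (rule imageI)
  then have "y \<in> X \<inter> \<theta> ` X" using y(1) theta_theta[OF in_V(3)] by simp
  then have tight: "tight_set E (X \<union> \<theta> ` X)"
    using tight_set_Un_in_V[OF XV _ X(2) tight_set_theta_image[OF XV X(2)]] Y0 by blast
  have "{a, \<theta> a} \<subseteq> X \<union> \<theta> ` X" using a(2) by simp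
  then have "x \<in> X \<union> \<theta> ` X" "\<theta> x \<in> X \<union> \<theta> ` X"
    using a(1) theta_theta[OF in_V(1)] by auto
  moreover have "X \<union> \<theta> ` X \<subseteq> V\<^sub>0" using X(1) Y0 by simp
  ultimately show False
    using not_tight_set_through_neighbours tight y by blast
qed

definition has_blocker :: "'a \<Rightarrow> 'a \<Rightarrow> bool" where
  "has_blocker s t \<longleftrightarrow> (\<exists>X \<subseteq> V\<^sub>0. s \<in> X \<and> t \<in> X \<and> tight_set E X)"

lemma no_blocker_across_edges:
  assumes a: "a \<in> {x, \<theta> x}" and ay: "{a, y} \<in> E"
  shows "\<not> has_blocker a (\<theta> y)"
proof
  assume "has_blocker a (\<theta> y)"
  then obtain X where X: "X \<subseteq> V\<^sub>0" "a \<in> X" "\<theta> y \<in> X" "tight_set E X"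
    by (auto simp: has_blocker_def)
  let ?Y = "\<theta> ` X"
  have XV: "X \<subseteq> V" and Y0: "?Y \<subseteq> V\<^sub>0" using X(1) theta_V0 by auto
  have tY: "tight_set E ?Y" using tight_set_theta_image[OF XV X(4)] .
  have aY: "\<theta> a \<in> ?Y" using X(2) by (rule imageI)
  have "\<theta> (\<theta> y) \<in> ?Y" using X(3) by (rule imageI)
  then have yY: "y \<in> ?Y" using theta_theta[OF in_V(3)] by simp
  have "tight_set E (X \<union> ?Y)"
  proof (cases "X \<inter> ?Y = {}")
    case False
    then show ?thesis using tight_set_Un_in_V[OF XV _ X(4) tY] Y0 by auto
  next
    case True
    let ?C = "{{a, y}, {\<theta> a, \<theta> y}}"
    have "a \<noteq> \<theta> a" "a \<noteq> \<theta> y" using a distinct theta_theta[OF in_V(1)] by auto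
    then have "card ?C = 2" by (simp add: doubleton_eq_iff)
    moreover have "?C \<subseteq> induced_edges E (X \<union> ?Y)"
      using theta_edge[OF ay] ay X(2,3) aY yY by (simp add: induced_edges_def)
    moreover have "\<forall>e\<in>?C. \<not> e \<subseteq> X \<and> \<not> e \<subseteq> ?Y"
      using True X(2,3) aY yY by blast
    moreover have "finite X" using XV finite_V finite_subset by blast
    moreover from this have "finite ?Y" by simp
    ultimately show ?thesis
      using tight_set_Un_disjoint[OF finite_E empty_notin_E _ _ True X(4) tY, of ?C] by simp
  qed
  moreover have "{a, \<theta> a, y, \<theta> y} \<subseteq> X \<union> ?Y" using X(2,3) aY yY by blast
  then have "x \<in> X \<union> ?Y" "\<theta> x \<in> X \<union> ?Y" "y \<in> X \<union> ?Y" "\<theta> y \<in> X \<union> ?Y"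
    using a theta_theta[OF in_V(1)] by auto
  moreover have "X \<union> ?Y \<subseteq> V\<^sub>0" using X(1) Y0 by simp
  ultimately show False using not_tight_set_through_neighbours by blast
qed

lemma not_blocked_both: "\<not> (has_blocker x y \<and> has_blocker x (\<theta> y))"
proof
  assume "has_blocker x y \<and> has_blocker x (\<theta> y)"
  then obtain X Y where X: "X \<subseteq> V\<^sub>0" "x \<in> X" "y \<in> X" "tight_set E X"
    and Y: "Y \<subseteq> V\<^sub>0" "x \<in> Y" "\<theta> y \<in> Y" "tight_set E Y"
    by (auto simp: has_blocker_def)
  have "tight_set E (X \<union> Y)" using tight_set_Un_in_V X Y by blast
  then show False using no_tight_set_through_y_pair[of "X \<union> Y" x] X Y by auto
qed

lemma reduction_endpoints:
  assumes "s \<in> {x, \<theta> x}" "t \<in> {y, \<theta> y}"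
  shows "s \<in> V\<^sub>0" "\<theta> s \<in> V\<^sub>0" "t \<in> V\<^sub>0" "\<theta> t \<in> V\<^sub>0" "\<theta> (\<theta> s) = s" "\<theta> (\<theta> t) = t"
    "s \<noteq> t" "\<theta> s \<noteq> \<theta> t" "s \<noteq> \<theta> s" "t \<noteq> \<theta> t" "s \<noteq> \<theta> t" "\<theta> s \<noteq> t"
    "{s, \<theta> s} = {x, \<theta> x}" "{t, \<theta> t} = {y, \<theta> y}"
  using assms in_V distinct theta_theta[OF in_V(1)] theta_theta[OF in_V(3)] by auto

lemma mirror_edges_distinct:
  assumes "s \<in> {x, \<theta> x}" "t \<in> {y, \<theta> y}"
  shows "{s, t} \<noteq> {\<theta> s, \<theta> t}"
  using reduction_endpoints[OF assms] by (simp add: doubleton_eq_iff)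

lemma card_mirror_edges:
  assumes "s \<in> {x, \<theta> x}" "t \<in> {y, \<theta> y}"
  shows "card {{s, t}, {\<theta> s, \<theta> t}} = 2"
  using mirror_edges_distinct[OF assms] by simp

lemma reduce_E_eq: "reduce_E E \<theta> v s t = E\<^sub>0 \<union> {{s, t}, {\<theta> s, \<theta> t}}"
  by (simp add: reduce_E_def)

lemma reduction_z2_symmetric:
  assumes "s \<in> {x, \<theta> x}" "t \<in> {y, \<theta> y}"
  shows "z2_symmetric (reduce_V V \<theta> v) (reduce_E E \<theta> v s t) \<theta>"
proof -
  note ends = reduction_endpoints[OF assms]
  have "simple_graph V\<^sub>0 (reduce_E E \<theta> v s t)"
    unfolding simple_graph_def reduce_E_eq
  proof (intro conjI ballI)
    fix e assume "e \<in> E\<^sub>0 \<union> {{s, t}, {\<theta> s, \<theta> t}}"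
    then show "\<exists>u w. e = {u, w} \<and> u \<noteq> w \<and> u \<in> V\<^sub>0 \<and> w \<in> V\<^sub>0"
      using edge_doubleton ends by blast
  qed (use finite_V in simp)
  moreover have "\<theta> u \<in> V\<^sub>0 \<and> \<theta> (\<theta> u) = u" if "u \<in> V\<^sub>0" for u
    using that theta_V0[of "{u}"] theta_theta by auto
  moreover have "\<theta> ` e \<in> E\<^sub>0 \<union> {{s, t}, {\<theta> s, \<theta> t}}" if "e \<in> E\<^sub>0 \<union> {{s, t}, {\<theta> s, \<theta> t}}" for e
  proof -
    have "\<theta> ` e \<in> E\<^sub>0" if "e \<in> E\<^sub>0"
      using that theta_image_edge theta_V0[of e] edges_Pow_V by blast
    then show ?thesis using that ends(5,6) by auto
  qed
  ultimately show ?thesis by (simp add: z2_symmetric_def reduce_V_def reduce_E_eq)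
qed

lemma card_reduce_E:
  assumes "s \<in> {x, \<theta> x}" "t \<in> {y, \<theta> y}" "{s, t} \<notin> E"
  shows "int (card (reduce_E E \<theta> v s t)) = 2 * int (card (reduce_V V \<theta> v)) - 2"
proof -
  note ends = reduction_endpoints[OF assms(1,2)]
  have "{\<theta> s, \<theta> t} \<notin> E" using assms(3) theta_edge[of "\<theta> s" "\<theta> t"] ends(5,6) by auto
  then have "E\<^sub>0 \<inter> {{s, t}, {\<theta> s, \<theta> t}} = {}" using assms(3) by auto
  moreover note card_mirror_edges[OF assms(1,2)]
  ultimately have "card (reduce_E E \<theta> v s t) = card E\<^sub>0 + 2"
    unfolding reduce_E_eq by (subst card_Un_disjoint) (use finite_E in auto)
  moreover have "card (reduce_V V \<theta> v) = card V - 2"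
    using finite_V vV in_V(5) distinct(1) by (simp add: reduce_V_def card_Diff_subset)
  moreover have "card {v, \<theta> v} \<le> card V" using finite_V vV in_V(5) by (intro card_mono) auto
  ultimately show ?thesis using card_E0 card_E distinct(1) by simp
qed

lemma reduction_sparse22:
  assumes st: "s \<in> {x, \<theta> x}" "t \<in> {y, \<theta> y}" and unblocked: "\<not> has_blocker s t"
  shows "sparse22 (reduce_V V \<theta> v) (reduce_E E \<theta> v s t)"
proof (unfold sparse22_def, intro allI impI, elim conjE)
  note ends = reduction_endpoints[OF st]
  fix V' E' assume ne: "V' \<noteq> {}" and "V' \<subseteq> reduce_V V \<theta> v" and E'E: "E' \<subseteq> reduce_E E \<theta> v s t"
    and E'V': "\<forall>e\<in>E'. e \<subseteq> V'"
  then have V'0: "V' \<subseteq> V\<^sub>0" by (simp add: reduce_V_def)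
  define N where "N = {{s, t}, {\<theta> s, \<theta> t}} \<inter> Pow V'"
  have "E' \<subseteq> induced_edges E V' \<union> N"
    using E'E E'V' unfolding reduce_E_eq induced_edges_def N_def by blast
  then have "card E' \<le> card (induced_edges E V' \<union> N)"
    by (rule card_mono[rotated]) (simp add: finite_induced_edges[OF finite_E] N_def)
  also have "\<dots> \<le> card (induced_edges E V') + card N" by (rule card_Un_le)
  finally have count: "int (card E') \<le> int (card (induced_edges E V')) + int (card N)" by simp
  show "int (card E') \<le> 2 * int (card V') - 2"
  proof (cases "N = {}")
    case True
    have "V' \<subseteq> V" using V'0 by blast
    then show ?thesis using count True sparse22_induced_edges[OF sparse ne] by simp
  next
    case False
    have "\<not> tight_set E V'"
    proof
      assume tight: "tight_set E V'"
      have "\<not> {s, t} \<subseteq> V'" using unblocked V'0 tight unfolding has_blocker_def by blast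
      moreover have "\<not> {\<theta> s, \<theta> t} \<subseteq> V'"
      proof
        assume "{\<theta> s, \<theta> t} \<subseteq> V'"
        then have "{\<theta> (\<theta> s), \<theta> (\<theta> t)} \<subseteq> \<theta> ` V'" by blast
        then have "{s, t} \<subseteq> \<theta> ` V'" using ends(5,6) by simp
        moreover have "\<theta> ` V' \<subseteq> V\<^sub>0" "tight_set E (\<theta> ` V')"
          using theta_V0[OF V'0] tight_set_theta_image[OF _ tight] V'0 by auto
        ultimately show False using unblocked unfolding has_blocker_def by blast
      qed
      ultimately show False using False unfolding N_def by blast
    qed
    then have nontight: "int (card (induced_edges E V')) \<le> 2 * int (card V') - 3"
      unfolding tight_set_def by simp
    have card_N: "card N \<le> card {{s, t}, {\<theta> s, \<theta> t}}" by (rule card_mono) (auto simp: N_def)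
    show ?thesis
    proof (cases "{s, t, \<theta> s, \<theta> t} \<subseteq> V'")
      case True
      then have "{x, \<theta> x} \<subseteq> V'" "{y, \<theta> y} \<subseteq> V'" unfolding ends(13,14)[symmetric] by auto
      then have "int (card (induced_edges E V')) \<le> 2 * int (card V') - 4"
        using card_induced_edges_through_neighbours[OF V'0] by simp
      then show ?thesis using count card_N card_mirror_edges[OF st] by linarith
    next
      case False
      have "N \<noteq> {{s, t}, {\<theta> s, \<theta> t}}"
      proof
        assume "N = {{s, t}, {\<theta> s, \<theta> t}}"
        then have "{s, t} \<in> N" "{\<theta> s, \<theta> t} \<in> N" by simp_all
        then show False using False mirror_edges_distinct[OF st] by (simp add: N_def)
      qed
      then have "N \<subset> {{s, t}, {\<theta> s, \<theta> t}}" by (simp add: N_def psubset_eq)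
      then have "card N < card {{s, t}, {\<theta> s, \<theta> t}}" by (rule psubset_card_mono[rotated]) simp
      then show ?thesis using count nontight card_mirror_edges[OF st] by linarith
    qed
  qed
qed

lemma reduction_Ci_tight22:
  assumes st: "s \<in> {x, \<theta> x}" "t \<in> {y, \<theta> y}" and "{s, t} \<notin> E" "\<not> has_blocker s t"
  shows "Ci_tight22 (reduce_V V \<theta> v) (reduce_E E \<theta> v s t) \<theta>"
proof -
  have "\<not> fixed_edge \<theta> e" if "e \<in> reduce_E E \<theta> v s t" for e
    using that theta_no_fixed_edge reduction_endpoints(5,6)[OF st] mirror_edges_distinct[OF st]
    unfolding reduce_E_eq fixed_edge_def by auto
  moreover have "\<not> fixed_vertex \<theta> u" if "u \<in> reduce_V V \<theta> v" for u
    using that theta_no_fixed_vertex by (auto simp: reduce_V_def fixed_vertex_def)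
  ultimately show ?thesis
    using reduction_z2_symmetric[OF st] reduction_sparse22[OF st assms(4)] card_reduce_E[OF assms(1-3)]
    by (simp add: Ci_tight22_def tight22_def)
qed

abbreviation "F1_copy \<equiv> {{x, v}, {x, y}, {x, \<theta> v}, {x, \<theta> y}, {\<theta> x, v}, {\<theta> x, y},
   {\<theta> x, \<theta> v}, {\<theta> x, \<theta> y}, {v, y}, {\<theta> v, \<theta> y}}"

definition F1_labelling :: "'a \<Rightarrow> nat" where
  "F1_labelling u = (if u = v then 0 else if u = y then 1 else if u = x then 2
     else if u = \<theta> x then 3 else if u = \<theta> v then 4 else 5)"

lemma F1_labelling_values:
  "F1_labelling v = 0" "F1_labelling y = 1" "F1_labelling x = 2" "F1_labelling (\<theta> x) = 3"
  "F1_labelling (\<theta> v) = 4" "F1_labelling (\<theta> y) = 5"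
  using distinct unfolding F1_labelling_def by auto

lemma bij_betw_F1_labelling: "bij_betw F1_labelling {v, \<theta> v, x, \<theta> x, y, \<theta> y} F1_verts"
proof -
  have "inj_on F1_labelling {v, \<theta> v, x, \<theta> x, y, \<theta> y}"
    by (intro inj_onI) (auto simp: F1_labelling_values)
  moreover have "F1_labelling ` {v, \<theta> v, x, \<theta> x, y, \<theta> y} = F1_verts"
    by (auto simp: F1_labelling_values F1_verts_def)
  ultimately show ?thesis by (simp add: bij_betw_def)
qed

lemma image_F1_copy: "(`) F1_labelling ` F1_copy = F1_edges"
  unfolding F1_edges_def by (simp add: F1_labelling_values)

lemma edges_on_F1_vertices:
  assumes e: "e \<subseteq> {v, \<theta> v, x, \<theta> x, y, \<theta> y}"
    and cross: "{x, y} \<in> E" "{\<theta> x, y} \<in> E" "{x, \<theta> y} \<in> E" "{\<theta> x, \<theta> y} \<in> E"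
  shows "e \<in> E \<longleftrightarrow> e \<in> F1_copy"
proof
  have fixed: "{x, \<theta> x} \<notin> E" "{y, \<theta> y} \<notin> E"
    using theta_no_fixed_edge theta_theta[OF in_V(1)] theta_theta[OF in_V(3)]
    by (metis image_empty image_insert insert_commute)+
  assume "e \<in> E"
  moreover obtain p q where pq: "e = {p, q}" "p \<noteq> q" using edge_doubleton \<open>e \<in> E\<close> by blast
  moreover have "p \<in> {v, \<theta> v, x, \<theta> x, y, \<theta> y}" "q \<in> {v, \<theta> v, x, \<theta> x, y, \<theta> y}"
    using pq e by auto
  ultimately show "e \<in> F1_copy"
    using fixed non_edges_at_v by (elim insertE emptyE; simp add: insert_commute)
next
  assume "e \<in> F1_copy"
  then show "e \<in> E" using edges_at_v cross by (elim insertE emptyE; simp add: insert_commute)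
qed

lemma induced_subgraph_iso_F1:
  assumes "{x, y} \<in> E" "{\<theta> x, y} \<in> E" "{x, \<theta> y} \<in> E" "{\<theta> x, \<theta> y} \<in> E"
  shows "graph_iso {v, \<theta> v, x, \<theta> x, y, \<theta> y}
    (induced_edges E {v, \<theta> v, x, \<theta> x, y, \<theta> y}) F1_verts F1_edges"
  unfolding graph_iso_def
proof (intro exI conjI allI impI)
  show bij: "bij_betw F1_labelling {v, \<theta> v, x, \<theta> x, y, \<theta> y} F1_verts"
    by (rule bij_betw_F1_labelling)
  fix e assume e: "e \<subseteq> {v, \<theta> v, x, \<theta> x, y, \<theta> y}"
  have "e \<in> induced_edges E {v, \<theta> v, x, \<theta> x, y, \<theta> y} \<longleftrightarrow> e \<in> F1_copy"
    using edges_on_F1_vertices[OF e assms] e by (simp add: induced_edges_def)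
  also have "\<dots> \<longleftrightarrow> F1_labelling ` e \<in> (`) F1_labelling ` F1_copy"
  proof
    show "F1_labelling ` e \<in> (`) F1_labelling ` F1_copy" if "e \<in> F1_copy" using that by (rule imageI)
  next
    assume "F1_labelling ` e \<in> (`) F1_labelling ` F1_copy"
    then obtain e' where e': "e' \<in> F1_copy" "F1_labelling ` e = F1_labelling ` e'" by blast
    have "e' \<subseteq> {v, \<theta> v, x, \<theta> x, y, \<theta> y}" using e'(1) by auto
    then have "e = e'"
      using e'(2) e bij_betw_imp_inj_on[OF bij] by (simp add: inj_on_image_eq_iff)
    then show "e \<in> F1_copy" using e'(1) by simp
  qed
  finally show "e \<in> induced_edges E {v, \<theta> v, x, \<theta> x, y, \<theta> y} \<longleftrightarrow> F1_labelling ` e \<in> F1_edges"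
    by (simp only: image_F1_copy)
qed

end

theorem lemma5p5:
  fixes V :: "'a set" and E :: "'a set set" and \<theta> :: "'a \<Rightarrow> 'a" and v x y :: 'a
  assumes G: "Ci_tight22 V E \<theta>"
    and vV: "v \<in> V"
    and deg: "degree V E v = 3"
    and common: "nbhd V E v \<inter> nbhd V E (\<theta> v) = {x, \<theta> x}"
    and Nv: "nbhd V E v = {x, \<theta> x, y}"
  shows "\<exists>a \<in> {x, \<theta> x}. \<theta> a \<in> {x, \<theta> x} \<and> {a, \<theta> a} = {x, \<theta> x} \<and>
    ( ({a, y} \<in> E \<and> {\<theta> a, y} \<in> E \<and> {a, \<theta> y} \<in> E \<and> {\<theta> a, \<theta> y} \<in> E \<and>
        graph_iso {v, \<theta> v, a, \<theta> a, y, \<theta> y}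
                  (induced_edges E {v, \<theta> v, a, \<theta> a, y, \<theta> y}) F1_verts F1_edges)
    \<or> ({a, y} \<in> E \<and> {\<theta> a, \<theta> y} \<in> E \<and> {a, \<theta> y} \<notin> E \<and> {\<theta> a, y} \<notin> E \<and>
        Ci_tight22 (reduce_V V \<theta> v) (reduce_E E \<theta> v a (\<theta> y)) \<theta>)
    \<or> ({a, y} \<notin> E \<and> {\<theta> a, y} \<notin> E \<and> {a, \<theta> y} \<notin> E \<and> {\<theta> a, \<theta> y} \<notin> E \<and>
        (Ci_tight22 (reduce_V V \<theta> v) (reduce_E E \<theta> v a y) \<theta> \<or>
         Ci_tight22 (reduce_V V \<theta> v) (reduce_E E \<theta> v a (\<theta> y)) \<theta>)))"
proof -
  interpret deg3_shared_pair V E \<theta> v x y using assms by unfold_locales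
  have tx: "\<theta> (\<theta> x) = x" and ty: "\<theta> (\<theta> y) = y" using theta_theta in_V by auto
  have mirror: "{x, y} \<in> E \<longleftrightarrow> {\<theta> x, \<theta> y} \<in> E" "{\<theta> x, y} \<in> E \<longleftrightarrow> {x, \<theta> y} \<in> E"
    using theta_edge[of x y] theta_edge[of "\<theta> x" "\<theta> y"] theta_edge[of "\<theta> x" y]
      theta_edge[of x "\<theta> y"] tx ty by auto
  consider (F1) "{x, y} \<in> E" "{\<theta> x, y} \<in> E" | (at_x) "{x, y} \<in> E" "{\<theta> x, y} \<notin> E"
    | (at_tx) "{x, y} \<notin> E" "{\<theta> x, y} \<in> E" | (none) "{x, y} \<notin> E" "{\<theta> x, y} \<notin> E"
    by blast
  then show ?thesis
  proof cases
    case F1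
    then show ?thesis using mirror induced_subgraph_iso_F1 by (intro bexI[of _ x]) auto
  next
    case at_x
    then show ?thesis
      using mirror reduction_Ci_tight22[of x "\<theta> y"] no_blocker_across_edges[of x]
      by (intro bexI[of _ x]) auto
  next
    case at_tx
    then show ?thesis
      using mirror reduction_Ci_tight22[of "\<theta> x" "\<theta> y"] no_blocker_across_edges[of "\<theta> x"] tx
      by (intro bexI[of _ "\<theta> x"]) (auto simp: insert_commute)
  next
    case none
    then show ?thesis
      using mirror reduction_Ci_tight22[of x y] reduction_Ci_tight22[of x "\<theta> y"] not_blocked_both
      by (intro bexI[of _ x]) auto
  qed
qed

end
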